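(* Let $d\ge 1$ and $n\ge d+2$. Suppose ${\bf A}={\bf D}{\bf P}$, with ${\bf D}$ an invertible diagonal $N\times N$ matrix and ${\bf P}$ a permutation matrix, is a linear automorphism of $M_{d,n}$. Then ${\bf A}$ is induced by a vertex relabeling (i.e., ${\bf P}$ maps each $e_{\{i,j\}}$ to $e_{\{\sigma(i),\sigma(j)\}}$ for some permutation $\sigma$ of $\{1,\dots,n\}$) and ${\bf A}$ has uniform scale (i.e., ${\bf D}$ is a scalar multiple of the identity).
   Context: Let $N=\binom{n}{2}$ and index coordinates of $\mathbb C^N$ by the edges $\{i,j\}$ of $K_n$, with coordinate vectors $e_{\{i,j\}}$. For a complex configuration ${\bf p}=({\bf p}_1,\dots,{\bf p}_n)$ in $\mathbb C^d$, $m({\bf p})\in\mathbb C^N$ has coordinates $m_{ij}({\bf p})=\sum_{k=1}^d({\bf p}_i^k-{\bf p}_j^k)^2$ (no conjugation); $M_{d,n}$ is the image of $m$ over all complex configurations. A linear automorphism of $M_{d,n}$ is a non-singular $N\times N$ complex matrix mapping $M_{d,n}$ bijectively onto itself. *)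

theory Defs
  imports Complex_Main "HOL-Combinatorics.Permutations"
begin

definition edges :: "nat \<Rightarrow> nat set set" where
  "edges n = {{i, j} | i j. i < j \<and> j < n}"

(* Vectors of C^N: functions on edges (values off the edge set are forced to 0). *)
definition vecs :: "nat \<Rightarrow> (nat set \<Rightarrow> complex) set" where
  "vecs n = {x. \<forall>e. e \<notin> edges n \<longrightarrow> x e = 0}"

(* Complex configuration p: p i k is the k-th coordinate of point i (i < n, k < d). *)
definition mvec :: "nat \<Rightarrow> nat \<Rightarrow> (nat \<Rightarrow> nat \<Rightarrow> complex) \<Rightarrow> nat set \<Rightarrow> complex" where
  "mvec d n p e = (if e \<in> edges n then (\<Sum>k<d. (p (Min e) k - p (Max e) k)^2) else 0)"

definition Mdn :: "nat \<Rightarrow> nat \<Rightarrow> (nat set \<Rightarrow> complex) set" where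
  "Mdn d n = range (mvec d n)"

definition matvec :: "nat \<Rightarrow> (nat set \<Rightarrow> nat set \<Rightarrow> complex) \<Rightarrow> (nat set \<Rightarrow> complex) \<Rightarrow> nat set \<Rightarrow> complex" where
  "matvec n A x = (\<lambda>e. if e \<in> edges n then (\<Sum>f\<in>edges n. A e f * x f) else 0)"

definition matmul :: "nat \<Rightarrow> (nat set \<Rightarrow> nat set \<Rightarrow> complex) \<Rightarrow> (nat set \<Rightarrow> nat set \<Rightarrow> complex) \<Rightarrow> nat set \<Rightarrow> nat set \<Rightarrow> complex" where
  "matmul n A B = (\<lambda>e g. \<Sum>f\<in>edges n. A e f * B f g)"

definition diag_mat :: "(nat set \<Rightarrow> complex) \<Rightarrow> nat set \<Rightarrow> nat set \<Rightarrow> complex" where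
  "diag_mat D = (\<lambda>e f. if e = f then D e else 0)"

(* permutation matrix sending basis vector e_f to e_(\<pi> f) *)
definition perm_mat :: "(nat set \<Rightarrow> nat set) \<Rightarrow> nat set \<Rightarrow> nat set \<Rightarrow> complex" where
  "perm_mat \<pi> = (\<lambda>e f. if e = \<pi> f then 1 else 0)"

definition nonsingular :: "nat \<Rightarrow> (nat set \<Rightarrow> nat set \<Rightarrow> complex) \<Rightarrow> bool" where
  "nonsingular n A \<longleftrightarrow> inj_on (matvec n A) (vecs n)"

definition lin_aut :: "nat \<Rightarrow> nat \<Rightarrow> (nat set \<Rightarrow> nat set \<Rightarrow> complex) \<Rightarrow> bool" where
  "lin_aut d n A \<longleftrightarrow> nonsingular n A \<and> bij_betw (matvec n A) (Mdn d n) (Mdn d n)"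

end

theory Submission
  imports Defs
begin

text \<open>
  The matrix \<open>D P\<close> acts as the monomial map \<open>x \<mapsto> (e \<mapsto> D e * x (inv \<pi> e))\<close>.
  For \<open>k + 3 \<le> n\<close>, a point \<open>y \<in> Mdn (Suc k) n\<close> lies in \<open>Mdn k n\<close> iff the directions of
  the lines through \<open>y\<close> inside \<open>Mdn (Suc k) n\<close> span \<open>\<complex>\<^sup>N\<close>. If \<open>y \<in> Mdn k n\<close>, then adding
  \<open>t * mvec 1 n q\<close> gives such lines, and the vectors \<open>mvec 1 n q\<close> span. If \<open>y = mvec (Suc k) n p\<close>
  is not in \<open>Mdn k n\<close>, the points of \<open>p\<close> have an affine dependence \<open>\<kappa>\<close> with two nonzero
  weights. A perturbation argument on Gram matrices shows that the nonzero linear form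
  \<open>v \<mapsto> \<Sum>{i,j}. \<kappa> i * \<kappa> j * v {i,j}\<close> vanishes on all such directions. An automorphism maps
  lines in \<open>Mdn (Suc k) n\<close> to lines in \<open>Mdn (Suc k) n\<close>, so \<open>D P\<close> preserves
  \<open>Mdn d n, \<dots>, Mdn 1 n\<close> in turn.

  In \<open>Mdn 1 n\<close>, moving one vertex \<open>u\<close> away from all the others gives the indicator vector
  of the star at \<open>u\<close>. Its image is a one-dimensional distance vector supported on
  \<open>\<pi> ` star n u\<close>. The support of such a vector is a complete multipartite graph, and one
  with \<open>n - 1\<close> edges has to be a star, on which \<open>D\<close> is then constant. So \<open>\<pi>\<close> maps
  stars to stars, which gives the vertex permutation \<open>\<sigma>\<close>. Any two stars meet, so \<open>D\<close> is
  constant.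
\<close>

section \<open>Linear algebra over a field\<close>

lemma sum_mult_diff_mult:
  fixes \<xi> :: "'a \<Rightarrow> 'b::comm_ring"
  shows "(\<Sum>a\<in>I. \<xi> a * (x a - y a * m)) = (\<Sum>a\<in>I. \<xi> a * x a) - (\<Sum>a\<in>I. \<xi> a * y a) * m"
  by (simp add: right_diff_distrib sum_subtractf sum_distrib_right mult.assoc)

lemma nontrivial_relation_lift_pivot:
  fixes V :: "'a \<Rightarrow> nat \<Rightarrow> 'b::field"
  assumes "finite I" and "a0 \<in> I" and "V a0 k \<noteq> 0"
    and "\<exists>a\<in>I - {a0}. \<xi> a \<noteq> 0"
    and "\<forall>c<k. (\<Sum>a\<in>I - {a0}. \<xi> a * (V a c - V a k * (V a0 c / V a0 k))) = 0"
  shows "\<exists>\<xi>'. (\<exists>a\<in>I. \<xi>' a \<noteq> 0) \<and> (\<forall>c<Suc k. (\<Sum>a\<in>I. \<xi>' a * V a c) = 0)"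
proof -
  define g where "g = - (\<Sum>a\<in>I - {a0}. \<xi> a * V a k) / V a0 k"
  define \<xi>' where "\<xi>' = \<xi>(a0 := g)"
  have sum_\<xi>': "(\<Sum>a\<in>I. \<xi>' a * V a c) = g * V a0 c + (\<Sum>a\<in>I - {a0}. \<xi> a * V a c)" for c
    using assms(1,2) by (simp add: \<xi>'_def sum.remove)
  have "(\<Sum>a\<in>I. \<xi>' a * V a c) = 0" if "c < Suc k" for c
  proof (cases "c = k")
    case True
    with assms(3) show ?thesis by (simp add: sum_\<xi>' g_def)
  next
    case False
    with that assms(5) have "(\<Sum>a\<in>I - {a0}. \<xi> a * (V a c - V a k * (V a0 c / V a0 k))) = 0" by simp
    then have "(\<Sum>a\<in>I - {a0}. \<xi> a * V a c) = (\<Sum>a\<in>I - {a0}. \<xi> a * V a k) * (V a0 c / V a0 k)"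
      by (simp only: sum_mult_diff_mult right_minus_eq)
    then show ?thesis by (simp add: sum_\<xi>' g_def)
  qed
  moreover have "\<exists>a\<in>I. \<xi>' a \<noteq> 0" using assms(4) by (auto simp: \<xi>'_def)
  ultimately show ?thesis by blast
qed

lemma exists_nontrivial_relation:
  fixes V :: "'a \<Rightarrow> nat \<Rightarrow> 'b::field"
  assumes "finite I" and "k < card I"
  shows "\<exists>\<xi>. (\<exists>a\<in>I. \<xi> a \<noteq> 0) \<and> (\<forall>c<k. (\<Sum>a\<in>I. \<xi> a * V a c) = 0)"
  using assms
proof (induction k arbitrary: I V)
  case 0
  then obtain a where "a \<in> I" by fastforce
  then show ?case by (intro exI[of _ "\<lambda>_. 1"]) auto
next
  case (Suc k)
  show ?case
  proof (cases "\<forall>a\<in>I. V a k = 0")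
    case True
    obtain \<xi> where \<xi>: "\<exists>a\<in>I. \<xi> a \<noteq> 0" "\<forall>c<k. (\<Sum>a\<in>I. \<xi> a * V a c) = 0"
      using Suc by force
    have "(\<Sum>a\<in>I. \<xi> a * V a k) = 0" using True by simp
    with \<xi> show ?thesis by (intro exI[of _ \<xi>]) (auto simp: less_Suc_eq)
  next
    case False
    then obtain a0 where a0: "a0 \<in> I" "V a0 k \<noteq> 0" by auto
    have "k < card (I - {a0})" using Suc.prems a0 by simp
    then obtain \<xi> where "\<exists>a\<in>I - {a0}. \<xi> a \<noteq> 0"
      and "\<forall>c<k. (\<Sum>a\<in>I - {a0}. \<xi> a * (V a c - V a k * (V a0 c / V a0 k))) = 0"
      using Suc.IH[of "I - {a0}" "\<lambda>a c. V a c - V a k * (V a0 c / V a0 k)"] Suc.prems(1) by blast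
    with Suc.prems(1) a0 show ?thesis by (rule nontrivial_relation_lift_pivot)
  qed
qed

lemma spanning_lift_pivot:
  fixes V :: "'a \<Rightarrow> nat \<Rightarrow> 'b::field"
  assumes "finite I" and "a0 \<in> I" and "V a0 k \<noteq> 0"
    and span: "\<forall>x. \<exists>\<xi>. \<forall>c<k. (\<Sum>a\<in>I. \<xi> a * (V a c - V a0 c / V a0 k * V a k)) = x c"
  shows "\<exists>\<xi>'. \<forall>c<Suc k. (\<Sum>a\<in>I. \<xi>' a * V a c) = x c"
proof -
  define m where "m c = V a0 c / V a0 k" for c
  obtain \<xi> where \<xi>: "\<forall>c<k. (\<Sum>a\<in>I. \<xi> a * (V a c - m c * V a k)) = x c - x k * m c"
    using span by (elim allE[of _ "\<lambda>c. x c - x k * m c"]) (auto simp: m_def)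
  define g where "g = (x k - (\<Sum>a\<in>I. \<xi> a * V a k)) / V a0 k"
  define \<xi>' where "\<xi>' = \<xi>(a0 := \<xi> a0 + g)"
  have sum_\<xi>': "(\<Sum>a\<in>I. \<xi>' a * V a c) = (\<Sum>a\<in>I. \<xi> a * V a c) + g * V a0 c" for c
    using assms(1,2) by (simp add: \<xi>'_def sum.remove algebra_simps)
  have "(\<Sum>a\<in>I. \<xi>' a * V a c) = x c" if "c < Suc k" for c
  proof (cases "c = k")
    case True
    with assms(3) show ?thesis by (simp add: sum_\<xi>' g_def)
  next
    case False
    with that \<xi> have "(\<Sum>a\<in>I. \<xi> a * (V a c - m c * V a k)) = x c - x k * m c" by simp
    then have "(\<Sum>a\<in>I. \<xi> a * V a c) = x c - x k * m c + (\<Sum>a\<in>I. \<xi> a * V a k) * m c"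
      by (simp add: mult.commute[of "m c"] sum_mult_diff_mult diff_eq_eq)
    moreover have "g * V a0 c = (x k - (\<Sum>a\<in>I. \<xi> a * V a k)) * m c"
      using assms(3) by (simp add: g_def m_def)
    ultimately show ?thesis unfolding sum_\<xi>' by algebra
  qed
  then show ?thesis by blast
qed

lemma spans_or_annihilated:
  fixes V :: "'a \<Rightarrow> nat \<Rightarrow> 'b::field"
  assumes "finite I"
  shows "(\<forall>x. \<exists>\<xi>. \<forall>c<k. (\<Sum>a\<in>I. \<xi> a * V a c) = x c)
    \<or> (\<exists>w. (\<exists>c<k. w c \<noteq> 0) \<and> (\<forall>a\<in>I. (\<Sum>c<k. w c * V a c) = 0))"
proof (induction k arbitrary: V)
  case 0
  show ?case by simp
next
  case (Suc k)
  show ?case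
  proof (cases "\<forall>a\<in>I. V a k = 0")
    case True
    then have "\<forall>a\<in>I. (\<Sum>c<Suc k. (if c = k then 1 else 0) * V a c) = 0" by simp
    then show ?thesis by (intro disjI2 exI[of _ "\<lambda>c. if c = k then 1 else 0"]) auto
  next
    case False
    then obtain a0 where a0: "a0 \<in> I" "V a0 k \<noteq> 0" by auto
    define m where "m c = V a0 c / V a0 k" for c
    from Suc.IH[of "\<lambda>a c. V a c - m c * V a k"] show ?thesis
    proof
      assume "\<forall>x. \<exists>\<xi>. \<forall>c<k. (\<Sum>a\<in>I. \<xi> a * (V a c - m c * V a k)) = x c"
      with assms a0 have "\<exists>\<xi>'. \<forall>c<Suc k. (\<Sum>a\<in>I. \<xi>' a * V a c) = x c" for x
        unfolding m_def by (rule spanning_lift_pivot)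
      then show ?thesis by blast
    next
      assume "\<exists>w. (\<exists>c<k. w c \<noteq> 0) \<and> (\<forall>a\<in>I. (\<Sum>c<k. w c * (V a c - m c * V a k)) = 0)"
      then obtain w where w: "\<exists>c<k. w c \<noteq> 0" "\<forall>a\<in>I. (\<Sum>c<k. w c * (V a c - m c * V a k)) = 0"
        by blast
      define w' where "w' = w(k := - (\<Sum>c<k. w c * m c))"
      have "(\<Sum>c<Suc k. w' c * V a c) = 0" if "a \<in> I" for a
      proof -
        have "(\<Sum>c<k. w c * V a c) = V a k * (\<Sum>c<k. w c * m c)"
          using w(2) that by (simp add: sum_mult_diff_mult)
        then show ?thesis by (simp add: w'_def)
      qed
      moreover have "\<exists>c<Suc k. w' c \<noteq> 0" using w(1) by (auto simp: w'_def)
      ultimately show ?thesis by blast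
    qed
  qed
qed

section \<open>Edges and distance vectors\<close>

lemma doubleton_in_edges_iff: "{i, j} \<in> edges n \<longleftrightarrow> i \<noteq> j \<and> i < n \<and> j < n"
proof
  assume "{i, j} \<in> edges n"
  then obtain a b where "{i, j} = {a, b}" "a < b" "b < n" by (auto simp: edges_def)
  then show "i \<noteq> j \<and> i < n \<and> j < n" by (auto simp: doubleton_eq_iff)
next
  assume "i \<noteq> j \<and> i < n \<and> j < n"
  then have "i < j \<and> j < n \<or> j < i \<and> i < n" by auto
  moreover have "{i, j} = {j, i}" by (rule insert_commute)
  ultimately show "{i, j} \<in> edges n" unfolding edges_def by blast
qed

lemma edgesE:
  assumes "e \<in> edges n"
  obtains i j where "e = {i, j}" "i < j" "j < n"
  using assms by (auto simp: edges_def)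

lemma finite_edges: "finite (edges n)"
  by (rule finite_subset[of _ "Pow {..<n}"]) (auto simp: edges_def)

lemma sum_edges: "(\<Sum>e\<in>edges n. G e) = (\<Sum>j<n. \<Sum>i<j. G {i, j})"
proof -
  have "inj_on (\<lambda>(j, i). {i, j}) (SIGMA j:{..<n}. {..<j})"
    by (auto simp: inj_on_def doubleton_eq_iff)
  moreover have "(\<lambda>(j, i). {i, j}) ` (SIGMA j:{..<n}. {..<j}) = edges n"
    by (auto simp: edges_def)
  ultimately have "(\<Sum>e\<in>edges n. G e) = (\<Sum>(j, i)\<in>(SIGMA j:{..<n}. {..<j}). G {i, j})"
    by (metis (no_types, lifting) case_prod_unfold sum.reindex_cong)
  also have "\<dots> = (\<Sum>j<n. \<Sum>i<j. G {i, j})"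
    by (rule sum.Sigma[symmetric]) auto
  finally show ?thesis .
qed

definition sqdist :: "nat \<Rightarrow> (nat \<Rightarrow> nat \<Rightarrow> complex) \<Rightarrow> nat \<Rightarrow> nat \<Rightarrow> complex" where
  "sqdist k p i j = (\<Sum>c<k. (p i c - p j c)^2)"

lemma mvec_doubleton:
  assumes "i < n" "j < n" "i \<noteq> j"
  shows "mvec k n p {i, j} = sqdist k p i j"
proof (cases "i < j")
  case True
  with assms show ?thesis by (simp add: mvec_def sqdist_def doubleton_in_edges_iff)
next
  case False
  with assms have "Min {i, j} = j" "Max {i, j} = i" by auto
  with assms show ?thesis by (simp add: mvec_def sqdist_def doubleton_in_edges_iff power2_commute)
qed

lemma mvec_eqI:
  assumes "\<And>i j. i < n \<Longrightarrow> j < n \<Longrightarrow> i \<noteq> j \<Longrightarrow> sqdist k p i j = sqdist k' q i j"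
  shows "mvec k n p = mvec k' n q"
proof
  fix e
  show "mvec k n p e = mvec k' n q e"
  proof (cases "e \<in> edges n")
    case True
    then obtain i j where "e = {i, j}" "i < j" "j < n" by (rule edgesE)
    with assms[of i j] show ?thesis by (simp add: mvec_doubleton)
  qed (simp add: mvec_def)
qed

lemma mvec_in_vecs: "mvec k n p \<in> vecs n"
  by (simp add: vecs_def mvec_def)

lemma Mdn_subset_vecs: "Mdn k n \<subseteq> vecs n"
  by (auto simp: Mdn_def mvec_in_vecs)

lemma Mdn_add_rank_one: "(\<lambda>e. mvec k n p e + t * mvec 1 n q e) \<in> Mdn (Suc k) n"
proof -
  define p' where "p' i c = (if c < k then p i c else csqrt t * q i 0)" for i c
  have "(\<lambda>e. mvec k n p e + t * mvec 1 n q e) = mvec (Suc k) n p'"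
  proof (rule ext)
    fix e
    have "(csqrt t * q i 0 - csqrt t * q j 0)^2 = t * (q i 0 - q j 0)^2" for i j
      by (simp add: power_mult_distrib flip: right_diff_distrib)
    then show "mvec k n p e + t * mvec 1 n q e = mvec (Suc k) n p' e"
      by (simp add: mvec_def p'_def)
  qed
  then show ?thesis by (simp add: Mdn_def)
qed

lemma Mdn_subset_Suc: "Mdn k n \<subseteq> Mdn (Suc k) n"
  using Mdn_add_rank_one[of k n _ 0] by (auto simp: Mdn_def)

definition cut_conf :: "nat set \<Rightarrow> nat \<Rightarrow> nat \<Rightarrow> complex" where
  "cut_conf S i c = (if i \<in> S then 1 else 0)"

lemma mvec_cut_conf:
  assumes "i < n" "j < n" "i \<noteq> j"
  shows "mvec (Suc 0) n (cut_conf S) {i, j} = (if i \<in> S \<longleftrightarrow> j \<in> S then 0 else 1)"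
  using assms by (simp add: mvec_doubleton sqdist_def cut_conf_def)

section \<open>Dropping a dimension\<close>

definition cdot :: "nat \<Rightarrow> (nat \<Rightarrow> complex) \<Rightarrow> (nat \<Rightarrow> complex) \<Rightarrow> complex" where
  "cdot k u v = (\<Sum>c<k. u c * v c)"

lemma cdot_commute: "cdot k u v = cdot k v u"
  by (simp add: cdot_def mult.commute)

lemma cdot_add_left: "cdot k (\<lambda>c. x c + y c) z = cdot k x z + cdot k y z"
  by (simp add: cdot_def distrib_right sum.distrib)

lemma cdot_diff_left: "cdot k (\<lambda>c. x c - y c) z = cdot k x z - cdot k y z"
  by (simp add: cdot_def left_diff_distrib sum_subtractf)

lemma cdot_scale_left: "cdot k (\<lambda>c. a * x c) z = a * cdot k x z"
  by (simp add: cdot_def sum_distrib_left mult.assoc)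

lemma cdot_add_right: "cdot k z (\<lambda>c. x c + y c) = cdot k z x + cdot k z y"
  by (simp add: cdot_def distrib_left sum.distrib)

lemma cdot_diff_right: "cdot k z (\<lambda>c. x c - y c) = cdot k z x - cdot k z y"
  by (simp add: cdot_def right_diff_distrib sum_subtractf)

lemma cdot_scale_right: "cdot k z (\<lambda>c. a * x c) = a * cdot k z x"
  by (simp add: cdot_def sum_distrib_left mult.left_commute)

lemmas cdot_linear = cdot_add_left cdot_diff_left cdot_scale_left
  cdot_add_right cdot_diff_right cdot_scale_right

lemma sqdist_eq_cdot: "sqdist k p i j = cdot k (\<lambda>c. p i c - p j c) (\<lambda>c. p i c - p j c)"
  by (simp add: sqdist_def cdot_def power2_eq_square)

lemma cdot_axis: "cdot (Suc K) (\<lambda>c. if c = K then 1 else 0) x = x K"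
  by (simp add: cdot_def if_distrib cong: if_cong)

definition reflect :: "nat \<Rightarrow> (nat \<Rightarrow> complex) \<Rightarrow> (nat \<Rightarrow> complex) \<Rightarrow> nat \<Rightarrow> complex" where
  "reflect k h x c = x c - 2 * cdot k h x / cdot k h h * h c"

lemma reflect_diff: "reflect k h (\<lambda>c. x c - y c) c = reflect k h x c - reflect k h y c"
  by (simp add: reflect_def cdot_diff_right algebra_simps diff_divide_distrib)

lemma reflect_eq: "reflect k h x = (\<lambda>c. x c - (2 * cdot k h x / cdot k h h) * h c)"
  by (simp add: reflect_def fun_eq_iff)

lemma cdot_reflect:
  assumes "cdot k h h \<noteq> 0"
  shows "cdot k (reflect k h x) (reflect k h y) = cdot k x y"
proof -
  define a b where "a = 2 * cdot k h x / cdot k h h" and "b = 2 * cdot k h y / cdot k h h"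
  have "cdot k (reflect k h x) (reflect k h y)
      = cdot k x y - b * cdot k x h - a * (cdot k h y - b * cdot k h h)"
    by (simp only: reflect_eq a_def b_def cdot_linear)
  with assms show ?thesis by (simp add: a_def b_def cdot_commute[of k x h] field_simps)
qed

lemma reflect_onto_axis:
  assumes "cdot (Suc K) u u \<noteq> 0"
  obtains h \<beta> where "cdot (Suc K) h h \<noteq> 0" and "\<beta> \<noteq> 0"
    and "reflect (Suc K) h u = (\<lambda>c. \<beta> * (if c = K then 1 else 0))"
proof -
  define e :: "nat \<Rightarrow> complex" where "e c = (if c = K then 1 else 0)" for c
  define \<alpha> where "\<alpha> = csqrt (cdot (Suc K) u u)"
  \<comment> \<open>The sign \<open>s\<close> keeps \<open>h\<close> anisotropic, since \<open>cdot (Suc K) h h = 2 \<alpha> (\<alpha> - s * u K)\<close>.\<close>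
  define s :: complex where "s = (if \<alpha> = u K then -1 else 1)"
  define h where "h c = u c - s * \<alpha> * e c" for c
  have \<alpha>2: "\<alpha> * \<alpha> = cdot (Suc K) u u" by (simp add: \<alpha>_def flip: power2_eq_square)
  have nz: "\<alpha> \<noteq> 0" "\<alpha> - s * u K \<noteq> 0" and s2: "s * s = 1"
    using assms \<alpha>2 by (auto simp: s_def)
  have ee: "cdot (Suc K) e e = 1" and eu: "cdot (Suc K) e u = u K"
    unfolding e_def cdot_axis by simp_all
  have hu: "cdot (Suc K) h u = \<alpha> * (\<alpha> - s * u K)"
    using \<alpha>2 eu by (simp only: h_def[abs_def] cdot_linear) (simp add: algebra_simps)
  have hh: "cdot (Suc K) h h = 2 * (\<alpha> * (\<alpha> - s * u K))"
    using \<alpha>2 eu ee s2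
    by (simp only: h_def[abs_def] cdot_linear cdot_commute[of _ u e]) (simp add: algebra_simps)
  show ?thesis
  proof
    show "cdot (Suc K) h h \<noteq> 0" using hh nz by simp
    show "s * \<alpha> \<noteq> 0" using nz s2 by auto
    have "2 * cdot (Suc K) h u / cdot (Suc K) h h = 1"
      using hu hh nz by simp
    then show "reflect (Suc K) h u = (\<lambda>c. s * \<alpha> * (if c = K then 1 else 0))"
      by (simp add: reflect_eq h_def e_def fun_eq_iff)
  qed
qed

lemma mvec_reflect:
  assumes "cdot k h h \<noteq> 0"
  shows "mvec k n (\<lambda>i. reflect k h (p i)) = mvec k n p"
proof (rule mvec_eqI)
  fix i j
  have "(\<lambda>c. reflect k h (p i) c - reflect k h (p j) c) = reflect k h (\<lambda>c. p i c - p j c)"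
    by (simp add: reflect_diff fun_eq_iff)
  with assms show "sqdist k (\<lambda>i. reflect k h (p i)) i j = sqdist k p i j"
    by (simp add: sqdist_eq_cdot cdot_reflect)
qed

lemma mvec_in_Mdn_if_last_coord_const:
  assumes "\<And>i. i < n \<Longrightarrow> p i K = p 0 K"
  shows "mvec (Suc K) n p \<in> Mdn K n"
proof -
  have "mvec (Suc K) n p = mvec K n p"
  proof (rule mvec_eqI)
    fix i j assume "i < n" "j < n"
    then have "p i K = p j K" using assms by metis
    then show "sqdist (Suc K) p i j = sqdist K p i j" by (simp add: sqdist_def)
  qed
  then show ?thesis by (simp add: Mdn_def)
qed

lemma mvec_in_Mdn_if_orthogonal_anisotropic:
  assumes "cdot (Suc K) u u \<noteq> 0"
    and "\<And>i. i < n \<Longrightarrow> cdot (Suc K) (\<lambda>c. p i c - p 0 c) u = 0"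
  shows "mvec (Suc K) n p \<in> Mdn K n"
proof -
  obtain h \<beta> where h: "cdot (Suc K) h h \<noteq> 0" and "\<beta> \<noteq> 0"
    and hu: "reflect (Suc K) h u = (\<lambda>c. \<beta> * (if c = K then 1 else 0))"
    using reflect_onto_axis[OF assms(1)] .
  define q where "q i = reflect (Suc K) h (p i)" for i
  have "q i K = q 0 K" if "i < n" for i
  proof -
    have "\<beta> * (q i K - q 0 K)
        = cdot (Suc K) (reflect (Suc K) h (\<lambda>c. p i c - p 0 c)) (reflect (Suc K) h u)"
      by (simp add: hu cdot_scale_right cdot_commute[of _ _ "\<lambda>c. if c = K then 1 else 0"]
          cdot_axis reflect_diff q_def)
    also have "\<dots> = 0"
      using cdot_reflect[OF h] assms(2)[OF that] by simp
    finally show ?thesis using \<open>\<beta> \<noteq> 0\<close> by simp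
  qed
  then have "mvec (Suc K) n q \<in> Mdn K n" by (rule mvec_in_Mdn_if_last_coord_const)
  moreover have "mvec (Suc K) n q = mvec (Suc K) n p"
    unfolding q_def by (rule mvec_reflect[OF h])
  ultimately show ?thesis by simp
qed

lemma mvec_shift_isotropic:
  assumes "cdot k w w = 0" and "\<And>i. i < n \<Longrightarrow> cdot k (\<lambda>c. p i c - p 0 c) w = 0"
  shows "mvec k n (\<lambda>i c. p i c - g i * w c) = mvec k n p"
proof (rule mvec_eqI)
  fix i j assume "i < n" "j < n"
  define X where "X c = p i c - p j c" for c
  have "X = (\<lambda>c. (p i c - p 0 c) - (p j c - p 0 c))" unfolding X_def by simp
  then have Xw: "cdot k X w = 0"
    using assms(2) \<open>i < n\<close> \<open>j < n\<close> by (simp only: cdot_diff_left) simp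
  have "(\<lambda>c. (p i c - g i * w c) - (p j c - g j * w c)) = (\<lambda>c. X c - (g i - g j) * w c)"
    by (simp add: X_def fun_eq_iff algebra_simps)
  moreover have "cdot k (\<lambda>c. X c - (g i - g j) * w c) (\<lambda>c. X c - (g i - g j) * w c)
      = cdot k X X - (g i - g j) * cdot k X w
        - (g i - g j) * (cdot k w X - (g i - g j) * cdot k w w)"
    by (simp only: cdot_linear)
  ultimately show "sqdist k (\<lambda>i c. p i c - g i * w c) i j = sqdist k p i j"
    using assms(1) Xw cdot_commute[of k w X] by (simp add: sqdist_eq_cdot flip: X_def)
qed

lemma mvec_in_Mdn_if_orthogonal_isotropic:
  assumes "c0 < Suc K" and "w c0 \<noteq> 0" and "cdot (Suc K) w w = 0"
    and orth: "\<And>i. i < n \<Longrightarrow> cdot (Suc K) (\<lambda>c. p i c - p 0 c) w = 0"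
  shows "mvec (Suc K) n p \<in> Mdn K n"
proof -
  \<comment> \<open>Shift along \<open>w\<close> so that the configuration is also orthogonal to some \<open>w'\<close> with
    \<open>cdot (Suc K) w w' = 1\<close>. Since \<open>w\<close> is isotropic, the shift keeps all distances, and \<open>r w + w'\<close>
    is anisotropic.\<close>
  define w' where "w' c = (if c = c0 then 1 / w c0 else 0)" for c
  define g where "g i = cdot (Suc K) (\<lambda>c. p i c - p 0 c) w'" for i
  define p' where "p' i c = p i c - g i * w c" for i c
  define r where "r = (1 - cdot (Suc K) w' w') / 2"
  define u where "u c = r * w c + w' c" for c
  have "cdot (Suc K) w w' = (\<Sum>c<Suc K. if c = c0 then 1 else 0)"
    unfolding cdot_def using assms(2) by (intro sum.cong) (auto simp: w'_def)
  then have ww': "cdot (Suc K) w w' = 1"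
    using assms(1) by simp
  have "cdot (Suc K) u u = r * (r * cdot (Suc K) w w + cdot (Suc K) w w')
      + (r * cdot (Suc K) w' w + cdot (Suc K) w' w')"
    by (simp only: u_def[abs_def] cdot_linear)
  then have "cdot (Suc K) u u = 1"
    using assms(3) ww' by (simp add: cdot_commute[of _ w' w] r_def field_simps)
  moreover have "cdot (Suc K) (\<lambda>c. p' i c - p' 0 c) u = 0" if "i < n" for i
  proof -
    define X where "X c = p i c - p 0 c" for c
    have "(\<lambda>c. p' i c - p' 0 c) = (\<lambda>c. X c - g i * w c)"
      by (simp add: p'_def g_def X_def cdot_def fun_eq_iff)
    moreover have "cdot (Suc K) (\<lambda>c. X c - g i * w c) u
        = r * cdot (Suc K) X w + cdot (Suc K) X w'
          - g i * (r * cdot (Suc K) w w + cdot (Suc K) w w')"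
      by (simp add: u_def[abs_def] cdot_linear algebra_simps)
    moreover have "cdot (Suc K) X w = 0" "cdot (Suc K) X w' = g i"
      using orth[OF that] unfolding X_def g_def by simp_all
    ultimately show ?thesis using assms(3) ww' by simp
  qed
  ultimately have "mvec (Suc K) n p' \<in> Mdn K n"
    by (intro mvec_in_Mdn_if_orthogonal_anisotropic) auto
  moreover have "mvec (Suc K) n p' = mvec (Suc K) n p"
    unfolding p'_def using assms(3) orth by (rule mvec_shift_isotropic)
  ultimately show ?thesis by simp
qed

lemma mvec_in_Mdn_if_orthogonal:
  assumes "c0 < Suc K" and "w c0 \<noteq> 0"
    and "\<And>i. i < n \<Longrightarrow> cdot (Suc K) (\<lambda>c. p i c - p 0 c) w = 0"
  shows "mvec (Suc K) n p \<in> Mdn K n"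
  using assms mvec_in_Mdn_if_orthogonal_anisotropic mvec_in_Mdn_if_orthogonal_isotropic by metis

section \<open>The edge form\<close>

definition edge_form :: "nat \<Rightarrow> (nat set \<Rightarrow> complex) \<Rightarrow> (nat \<Rightarrow> complex) \<Rightarrow> (nat \<Rightarrow> complex) \<Rightarrow> complex"
  where "edge_form n y l m = (\<Sum>i<n. \<Sum>j<n. l i * m j * (if i = j then 0 else y {i, j}))"

definition lincomb :: "nat \<Rightarrow> (nat \<Rightarrow> complex) \<Rightarrow> (nat \<Rightarrow> nat \<Rightarrow> complex) \<Rightarrow> nat \<Rightarrow> complex"
  where "lincomb n l p c = (\<Sum>i<n. l i * p i c)"

lemma lincomb_diff_scaled:
  "lincomb n (\<lambda>i. l i - a * m i) p c = lincomb n l p c - a * lincomb n m p c"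
  by (simp add: lincomb_def algebra_simps sum_subtractf sum_distrib_left)

lemma sum_sum_mult_sq_diff:
  fixes a l m :: "nat \<Rightarrow> 'a::comm_ring_1"
  assumes "(\<Sum>i<n. l i) = 0" and "(\<Sum>j<n. m j) = 0"
  shows "(\<Sum>i<n. \<Sum>j<n. l i * m j * (a i - a j)^2) = -2 * ((\<Sum>i<n. l i * a i) * (\<Sum>j<n. m j * a j))"
proof -
  define S T where "S = (\<Sum>j<n. m j * a j)" and "T = (\<Sum>j<n. m j * a j^2)"
  have "(\<Sum>j<n. l i * m j * (a i - a j)^2)
      = l i * a i^2 * (\<Sum>j<n. m j) - 2 * (l i * a i) * S + l i * T" for i
    by (simp add: S_def T_def power2_diff algebra_simps sum.distrib sum_subtractf
        sum_distrib_left sum_distrib_right)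
  then have "(\<Sum>i<n. \<Sum>j<n. l i * m j * (a i - a j)^2) = (\<Sum>i<n. l i * T - 2 * S * (l i * a i))"
    using assms(2) by (intro sum.cong) (simp_all add: algebra_simps)
  also have "\<dots> = -2 * ((\<Sum>i<n. l i * a i) * S)"
    using assms(1) by (simp add: sum_subtractf sum_distrib_left[symmetric] sum_distrib_right[symmetric])
  finally show ?thesis by (simp add: S_def)
qed

lemma edge_form_mvec:
  assumes "(\<Sum>i<n. l i) = 0" and "(\<Sum>i<n. m i) = 0"
  shows "edge_form n (mvec k n p) l m = -2 * (\<Sum>c<k. lincomb n l p c * lincomb n m p c)"
proof -
  have "edge_form n (mvec k n p) l m = (\<Sum>i<n. \<Sum>j<n. \<Sum>c<k. l i * m j * (p i c - p j c)^2)"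
    unfolding edge_form_def
    by (intro sum.cong refl) (simp add: mvec_doubleton sqdist_def sum_distrib_left)
  also have "\<dots> = (\<Sum>c<k. \<Sum>i<n. \<Sum>j<n. l i * m j * (p i c - p j c)^2)"
    by (simp only: sum.swap[of _ "{..<k}"])
  also have "\<dots> = (\<Sum>c<k. -2 * (lincomb n l p c * lincomb n m p c))"
    using assms unfolding lincomb_def by (simp add: sum_sum_mult_sq_diff)
  finally show ?thesis by (simp add: sum_distrib_left)
qed

lemma edge_form_add_scaled:
  "edge_form n (\<lambda>e. y e + t * v e) l m = edge_form n y l m + t * edge_form n v l m"
proof -
  have "l i * m j * (if i = j then 0 else y {i, j} + t * v {i, j})
      = l i * m j * (if i = j then 0 else y {i, j}) + t * (l i * m j * (if i = j then 0 else v {i, j}))"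
    for i j
    by (simp add: algebra_simps)
  then show ?thesis by (simp add: edge_form_def sum.distrib sum_distrib_left)
qed

lemma edge_form_diff_scaled_left:
  "edge_form n y (\<lambda>i. l i - a * l' i) m = edge_form n y l m - a * edge_form n y l' m"
  unfolding edge_form_def by (simp add: algebra_simps sum_subtractf sum_distrib_left)

lemma sum_sum_symmetric:
  fixes F :: "nat \<Rightarrow> nat \<Rightarrow> 'a::comm_semiring_1"
  assumes "\<And>i j. F i j = F j i" and "\<And>i. F i i = 0"
  shows "(\<Sum>i<n. \<Sum>j<n. F i j) = 2 * (\<Sum>j<n. \<Sum>i<j. F i j)"
proof (induction n)
  case (Suc n)
  have "(\<Sum>j<n. F n j) = (\<Sum>i<n. F i n)"
    using assms(1) by (intro sum.cong) auto
  then have "(\<Sum>i<Suc n. \<Sum>j<Suc n. F i j) = (\<Sum>i<n. \<Sum>j<n. F i j) + 2 * (\<Sum>i<n. F i n)"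
    using assms(2)[of n] by (simp add: sum.distrib mult_2 add_ac)
  with Suc.IH show ?case by (simp add: distrib_left)
qed simp

lemma edge_form_diag: "edge_form n v l l = 2 * (\<Sum>e\<in>edges n. l (Min e) * l (Max e) * v e)"
proof -
  have "edge_form n v l l = 2 * (\<Sum>j<n. \<Sum>i<j. l i * l j * v {i, j})"
    unfolding edge_form_def
    by (subst sum_sum_symmetric) (auto simp: insert_commute mult.commute intro!: sum.cong)
  also have "(\<Sum>j<n. \<Sum>i<j. l i * l j * v {i, j}) = (\<Sum>j<n. \<Sum>i<j. l (Min {i, j}) * l (Max {i, j}) * v {i, j})"
    by (intro sum.cong refl) (simp add: min_def max_def)
  finally show ?thesis by (simp only: sum_edges)
qed

lemma edge_form_Mdn_singular:
  assumes "y \<in> Mdn k n" and "\<And>a. a < Suc k \<Longrightarrow> (\<Sum>i<n. \<mu> a i) = 0"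
  shows "\<exists>\<xi>. (\<exists>a<Suc k. \<xi> a \<noteq> 0) \<and> (\<forall>b<Suc k. (\<Sum>a<Suc k. \<xi> a * edge_form n y (\<mu> a) (\<mu> b)) = 0)"
proof -
  obtain p where y: "y = mvec k n p" using assms(1) by (auto simp: Mdn_def)
  define V where "V a c = lincomb n (\<mu> a) p c" for a c
  obtain \<xi> where \<xi>: "\<exists>a<Suc k. \<xi> a \<noteq> 0" "\<forall>c<k. (\<Sum>a<Suc k. \<xi> a * V a c) = 0"
    using exists_nontrivial_relation[of "{..<Suc k}" k V] by auto
  have "(\<Sum>a<Suc k. \<xi> a * edge_form n y (\<mu> a) (\<mu> b)) = 0" if "b < Suc k" for b
  proof -
    have "(\<Sum>a<Suc k. \<xi> a * edge_form n y (\<mu> a) (\<mu> b))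
        = -2 * (\<Sum>c<k. (\<Sum>a<Suc k. \<xi> a * V a c) * V b c)"
      using assms(2) that
      by (simp add: y edge_form_mvec V_def sum_distrib_left sum_distrib_right algebra_simps
          sum.swap[of _ "{..<k}"])
    with \<xi>(2) show ?thesis by simp
  qed
  with \<xi>(1) show ?thesis by blast
qed

definition zero_sum_lift :: "nat \<Rightarrow> (nat \<Rightarrow> complex) \<Rightarrow> nat \<Rightarrow> complex" where
  "zero_sum_lift n \<xi> i = (if i = 0 then - (\<Sum>j\<in>{1..<n}. \<xi> j) else \<xi> i)"

lemma sum_zero_sum_lift:
  assumes "0 < n"
  shows "(\<Sum>i<n. zero_sum_lift n \<xi> i) = 0"
proof -
  have "{..<n} = insert 0 {1..<n}" using assms by auto
  then show ?thesis by (simp add: zero_sum_lift_def)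
qed

lemma lincomb_zero_sum_lift:
  assumes "0 < n"
  shows "lincomb n (zero_sum_lift n \<xi>) p c = (\<Sum>i\<in>{1..<n}. \<xi> i * (p i c - p 0 c))"
proof -
  have "{..<n} = insert 0 {1..<n}" using assms by auto
  then show ?thesis
    by (simp add: lincomb_def zero_sum_lift_def right_diff_distrib sum_subtractf sum_distrib_right)
qed

lemma lincomb_onto_if_not_Mdn:
  assumes "mvec (Suc k) n p \<notin> Mdn k n" and "0 < n"
  shows "\<exists>l. (\<Sum>i<n. l i) = 0 \<and> (\<forall>c<Suc k. lincomb n l p c = x c)"
proof -
  define V where "V i c = p i c - p 0 c" for i c
  have "\<forall>x. \<exists>\<xi>. \<forall>c<Suc k. (\<Sum>i\<in>{1..<n}. \<xi> i * V i c) = x c"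
  proof -
    have False if "c0 < Suc k" "w c0 \<noteq> 0" and w: "\<forall>i\<in>{1..<n}. (\<Sum>c<Suc k. w c * V i c) = 0" for w c0
    proof -
      have "cdot (Suc k) (\<lambda>c. p i c - p 0 c) w = 0" if "i < n" for i
        using w that by (cases "i = 0") (auto simp: cdot_def V_def mult.commute)
      with that(1,2) have "mvec (Suc k) n p \<in> Mdn k n" by (rule mvec_in_Mdn_if_orthogonal)
      with assms(1) show False ..
    qed
    then show ?thesis using spans_or_annihilated[of "{1..<n}" "Suc k" V] by auto
  qed
  then obtain \<xi> where "\<forall>c<Suc k. (\<Sum>i\<in>{1..<n}. \<xi> i * V i c) = x c" by blast
  then show ?thesis using assms(2)
    by (intro exI[of _ "zero_sum_lift n \<xi>"]) (simp add: sum_zero_sum_lift lincomb_zero_sum_lift V_def)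
qed

lemma exists_affine_dependence:
  assumes "k + 1 < n"
  shows "\<exists>\<kappa>. (\<Sum>i<n. \<kappa> i) = 0 \<and> (\<forall>c<k. lincomb n \<kappa> p c = 0) \<and> (\<exists>i<n. \<kappa> i \<noteq> 0)"
proof -
  have "k < card {1..<n}" using assms by simp
  then obtain \<xi> where \<xi>: "\<exists>i\<in>{1..<n}. \<xi> i \<noteq> 0" "\<forall>c<k. (\<Sum>i\<in>{1..<n}. \<xi> i * (p i c - p 0 c)) = 0"
    using exists_nontrivial_relation[of "{1..<n}" k "\<lambda>i c. p i c - p 0 c"] by blast
  obtain i where "i \<in> {1..<n}" "\<xi> i \<noteq> 0" using \<xi>(1) by blast
  then have "i < n \<and> zero_sum_lift n \<xi> i \<noteq> 0" by (simp add: zero_sum_lift_def)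
  then have "\<exists>i<n. zero_sum_lift n \<xi> i \<noteq> 0" by blast
  with \<xi>(2) assms show ?thesis
    by (intro exI[of _ "zero_sum_lift n \<xi>"]) (simp add: sum_zero_sum_lift lincomb_zero_sum_lift)
qed

lemma zero_sum_other_nonzero:
  fixes \<kappa> :: "nat \<Rightarrow> 'a::comm_monoid_add"
  assumes "(\<Sum>i<n. \<kappa> i) = 0" and "i < n" and "\<kappa> i \<noteq> 0"
  shows "\<exists>j<n. j \<noteq> i \<and> \<kappa> j \<noteq> 0"
proof (rule ccontr)
  assume "\<not> ?thesis"
  then have "(\<Sum>j<n. \<kappa> j) = (\<Sum>j<n. if j = i then \<kappa> i else 0)"
    by (intro sum.cong) auto
  with assms show False by simp
qed

lemma left_kernel_trivial_if_small:
  fixes \<xi> :: "nat \<Rightarrow> complex" and A :: "nat \<Rightarrow> nat \<Rightarrow> complex"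
  assumes eq: "\<And>b. b < k \<Longrightarrow> 2 * \<xi> b = t * (\<Sum>a<k. \<xi> a * A a b)"
    and small: "cmod t * (\<Sum>a<k. \<Sum>b<k. cmod (A a b)) \<le> 1"
  shows "\<forall>a<k. \<xi> a = 0"
proof (cases "k = 0")
  case False
  define M where "M = Max ((\<lambda>a. cmod (\<xi> a)) ` {..<k})"
  have "M \<in> (\<lambda>a. cmod (\<xi> a)) ` {..<k}"
    using False unfolding M_def by (intro Max_in) auto
  then obtain b0 where "b0 < k" "cmod (\<xi> b0) = M" by auto
  moreover have "cmod (\<xi> a) \<le> M" if "a < k" for a
    using that unfolding M_def by (intro Max_ge) auto
  ultimately have b0: "b0 < k" "\<And>a. a < k \<Longrightarrow> cmod (\<xi> a) \<le> cmod (\<xi> b0)" by auto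
  have "2 * cmod (\<xi> b0) = cmod t * cmod (\<Sum>a<k. \<xi> a * A a b0)"
    using eq[OF b0(1)] by (metis norm_mult norm_numeral)
  also have "\<dots> \<le> cmod t * (\<Sum>a<k. cmod (\<xi> b0) * cmod (A a b0))"
    using b0(2) by (intro mult_left_mono order_trans[OF norm_sum] sum_mono)
      (auto simp: norm_mult intro: mult_right_mono)
  also have "\<dots> = cmod (\<xi> b0) * (cmod t * (\<Sum>a<k. cmod (A a b0)))"
    by (simp add: sum_distrib_left algebra_simps)
  also have "\<dots> \<le> cmod (\<xi> b0) * 1"
  proof (intro mult_left_mono)
    have "(\<Sum>a<k. cmod (A a b0)) \<le> (\<Sum>a<k. \<Sum>b<k. cmod (A a b))"
      using b0(1) by (intro sum_mono member_le_sum) auto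
    with small show "cmod t * (\<Sum>a<k. cmod (A a b0)) \<le> 1"
      by (meson mult_left_mono norm_ge_zero order_trans)
  qed simp
  finally have "\<xi> b0 = 0" by simp
  with b0(2) show ?thesis by fastforce
qed simp

lemma perturbed_diag_nonsingular:
  fixes A :: "nat \<Rightarrow> nat \<Rightarrow> complex"
  assumes "\<And>a. a < k \<Longrightarrow> A a k = 0" and "A k k \<noteq> 0"
  shows "\<exists>t. \<forall>\<xi>. (\<forall>b<Suc k. (\<Sum>a<Suc k. \<xi> a * ((if a = b \<and> b < k then -2 else 0) + t * A a b)) = 0)
    \<longrightarrow> (\<forall>a<Suc k. \<xi> a = 0)"
proof -
  define B where "B = (\<Sum>a<k. \<Sum>b<k. cmod (A a b)) + 1"
  have "B > 0" unfolding B_def by (simp add: add_nonneg_pos sum_nonneg)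
  define t where "t = complex_of_real (1 / B)"
  have "t \<noteq> 0" using \<open>B > 0\<close> by (simp add: t_def)
  have "cmod t = 1 / B"
    using \<open>B > 0\<close> unfolding t_def norm_of_real by simp
  then have small: "cmod t * (\<Sum>a<k. \<Sum>b<k. cmod (A a b)) \<le> 1"
    using \<open>B > 0\<close> by (simp add: B_def field_simps) (use norm_ge_zero[of t] in linarith)
  show ?thesis
  proof (rule exI[of _ t], rule allI, rule impI)
    fix \<xi>
    assume "\<forall>b<Suc k. (\<Sum>a<Suc k. \<xi> a * ((if a = b \<and> b < k then -2 else 0) + t * A a b)) = 0"
    then have \<xi>: "\<And>b. b < Suc k \<Longrightarrow> (\<Sum>a<Suc k. \<xi> a * ((if a = b \<and> b < k then -2 else 0) + t * A a b)) = 0"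
      by blast
    have "\<xi> k * (t * A k k) = 0"
      using \<xi>[of k] assms(1) by simp
    with \<open>t \<noteq> 0\<close> assms(2) have "\<xi> k = 0" by simp
    have "2 * \<xi> b = t * (\<Sum>a<k. \<xi> a * A a b)" if "b < k" for b
    proof -
      have "(\<Sum>a<k. \<xi> a * ((if a = b then -2 else 0) + t * A a b)) = 0"
        using \<xi>[of b] that \<open>\<xi> k = 0\<close> by simp
      moreover have "\<xi> a * ((if a = b then -2 else 0) + t * A a b)
          = (if a = b then -2 * \<xi> b else 0) + t * (\<xi> a * A a b)" for a
        by (simp add: algebra_simps)
      ultimately have "-2 * \<xi> b + t * (\<Sum>a<k. \<xi> a * A a b) = 0"
        using that by (simp add: sum.distrib sum_distrib_left)
      then show ?thesis by (simp add: algebra_simps)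
    qed
    then have "\<forall>a<k. \<xi> a = 0" using small by (rule left_kernel_trivial_if_small)
    with \<open>\<xi> k = 0\<close> show "\<forall>a<Suc k. \<xi> a = 0" by (auto simp: less_Suc_eq)
  qed
qed

section \<open>Lines through a point of \<open>Mdn\<close>\<close>

definition line_in_Mdn :: "nat \<Rightarrow> nat \<Rightarrow> (nat set \<Rightarrow> complex) \<Rightarrow> (nat set \<Rightarrow> complex) \<Rightarrow> bool" where
  "line_in_Mdn k n y v \<longleftrightarrow> v \<in> vecs n \<and> (\<forall>t. (\<lambda>e. y e + t * v e) \<in> Mdn k n)"

definition line_dirs_span :: "nat \<Rightarrow> nat \<Rightarrow> (nat set \<Rightarrow> complex) \<Rightarrow> bool" where
  "line_dirs_span k n y \<longleftrightarrow>
    (\<forall>w. (\<forall>v. line_in_Mdn k n y v \<longrightarrow> (\<Sum>e\<in>edges n. w e * v e) = 0) \<longrightarrow> (\<forall>e\<in>edges n. w e = 0))"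

lemma line_dirs_span_if_Mdn:
  assumes "y \<in> Mdn k n"
  shows "line_dirs_span (Suc k) n y"
  unfolding line_dirs_span_def
proof (intro allI impI ballI)
  fix w e
  assume w: "\<forall>v. line_in_Mdn (Suc k) n y v \<longrightarrow> (\<Sum>e\<in>edges n. w e * v e) = 0"
  assume "e \<in> edges n"
  then obtain a b where e: "e = {a, b}" "a < b" "b < n" by (rule edgesE)
  have "line_in_Mdn (Suc k) n y (mvec 1 n q)" for q
    using assms Mdn_add_rank_one by (auto simp: line_in_Mdn_def Mdn_def mvec_in_vecs)
  with w have w_mvec: "(\<Sum>f\<in>edges n. w f * mvec 1 n q f) = 0" for q by blast
  define v where
    "v f = mvec 1 n (cut_conf {a}) f + mvec 1 n (cut_conf {b}) f - mvec 1 n (cut_conf {a, b}) f" for f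
  have "(\<Sum>f\<in>edges n. w f * v f) = 0"
    using w_mvec[of "cut_conf {a}"] w_mvec[of "cut_conf {b}"] w_mvec[of "cut_conf {a, b}"]
    by (simp add: v_def algebra_simps sum.distrib sum_subtractf)
  moreover have "v f = (if f = e then 2 else 0)" if "f \<in> edges n" for f
  proof -
    obtain i j where f: "f = {i, j}" "i < j" "j < n" using \<open>f \<in> edges n\<close> by (rule edgesE)
    with e have "f = e \<longleftrightarrow> i = a \<and> j = b" by (auto simp: doubleton_eq_iff)
    moreover have "v f = (if i = a \<and> j = b then 2 else 0)"
    proof -
      have "i < n" "i \<noteq> j" using f by auto
      with f e(2) show ?thesis
        by (cases "i = a"; cases "j = b"; cases "i = b"; cases "j = a")
          (simp_all add: v_def mvec_cut_conf)
    qed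
    ultimately show ?thesis by simp
  qed
  then have "(\<Sum>f\<in>edges n. w f * v f) = (\<Sum>f\<in>edges n. if f = e then 2 * w e else 0)"
    by (intro sum.cong) auto
  ultimately have "(\<Sum>f\<in>edges n. if f = e then 2 * w e else 0) = 0"
    by simp
  with \<open>e \<in> edges n\<close> show "w e = 0" by (simp add: finite_edges)
qed

lemma edge_form_line_dir_vanishes:
  assumes line: "\<And>t. (\<lambda>e. mvec k n p e + t * v e) \<in> Mdn k n"
    and \<kappa>: "(\<Sum>i<n. \<kappa> i) = 0" "\<And>c. c < k \<Longrightarrow> lincomb n \<kappa> p c = 0"
    and l: "\<And>a. a < k \<Longrightarrow> (\<Sum>i<n. l a i) = 0"
      "\<And>a c. a < k \<Longrightarrow> c < k \<Longrightarrow> lincomb n (l a) p c = (if c = a then 1 else 0)"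
  shows "edge_form n v \<kappa> \<kappa> = 0"
proof (rule ccontr)
  assume C: "edge_form n v \<kappa> \<kappa> \<noteq> 0"
  \<comment> \<open>Make the dual vectors \<open>l a\<close> orthogonal to \<open>\<kappa>\<close> for \<open>edge_form n v\<close>. On the resulting
    \<open>\<mu> 0, \<dots>, \<mu> k\<close>, the edge form of \<open>mvec k n p + t v\<close> is \<open>diag(-2, \<dots>, -2, 0) + t A\<close>, and the last
    column of \<open>A\<close> is \<open>(0, \<dots>, 0, C)\<close>. For a suitable small \<open>t\<close> this matrix is nonsingular,
    which contradicts \<open>edge_form_Mdn_singular\<close>.\<close>
  define r where "r a = edge_form n v (l a) \<kappa> / edge_form n v \<kappa> \<kappa>" for a
  define \<mu> where "\<mu> a = (if a < k then (\<lambda>i. l a i - r a * \<kappa> i) else \<kappa>)" for a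
  have \<mu>_sum: "(\<Sum>i<n. \<mu> a i) = 0" for a
    using \<kappa>(1) l(1) by (simp add: \<mu>_def sum_subtractf flip: sum_distrib_left)
  have \<mu>_lincomb: "lincomb n (\<mu> a) p c = (if c = a then 1 else 0)" if "c < k" for a c
    using that \<kappa>(2) l(2) by (simp add: \<mu>_def lincomb_diff_scaled)
  have gram: "edge_form n (mvec k n p) (\<mu> a) (\<mu> b) = (if a = b \<and> b < k then -2 else 0)" for a b
  proof -
    have "(\<Sum>c<k. lincomb n (\<mu> a) p c * lincomb n (\<mu> b) p c) = (\<Sum>c<k. if c = a \<and> c = b then 1 else 0)"
      by (intro sum.cong) (auto simp: \<mu>_lincomb)
    also have "\<dots> = (if a = b \<and> b < k then 1 else 0)"
      by (cases "a = b") (auto intro: sum.neutral)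
    finally show ?thesis by (simp add: edge_form_mvec \<mu>_sum)
  qed
  define A where "A a b = edge_form n v (\<mu> a) (\<mu> b)" for a b
  have A_col: "A a k = 0" if "a < k" for a
    using that C by (simp add: A_def \<mu>_def edge_form_diff_scaled_left) (simp add: r_def)
  have A_corner: "A k k \<noteq> 0" using C by (simp add: A_def \<mu>_def)
  obtain t where t: "\<forall>\<xi>. (\<forall>b<Suc k.
      (\<Sum>a<Suc k. \<xi> a * ((if a = b \<and> b < k then -2 else 0) + t * A a b)) = 0) \<longrightarrow> (\<forall>a<Suc k. \<xi> a = 0)"
    using perturbed_diag_nonsingular[of k A, OF A_col A_corner] by blast
  have "\<exists>\<xi>. (\<exists>a<Suc k. \<xi> a \<noteq> 0) \<and>
      (\<forall>b<Suc k. (\<Sum>a<Suc k. \<xi> a * edge_form n (\<lambda>e. mvec k n p e + t * v e) (\<mu> a) (\<mu> b)) = 0)"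
    by (rule edge_form_Mdn_singular[OF line]) (rule \<mu>_sum)
  then obtain \<xi> where "\<exists>a<Suc k. \<xi> a \<noteq> 0"
    and "\<forall>b<Suc k. (\<Sum>a<Suc k. \<xi> a * edge_form n (\<lambda>e. mvec k n p e + t * v e) (\<mu> a) (\<mu> b)) = 0"
    by blast
  with t show False by (auto simp: edge_form_add_scaled gram A_def)
qed

lemma Mdn_if_line_dirs_span:
  assumes "k + 3 \<le> n" and "y \<in> Mdn (Suc k) n" and "line_dirs_span (Suc k) n y"
  shows "y \<in> Mdn k n"
proof (rule ccontr)
  assume "y \<notin> Mdn k n"
  obtain p where y: "y = mvec (Suc k) n p" using assms(2) by (auto simp: Mdn_def)
  have "\<forall>a. \<exists>l. (\<Sum>i<n. l i) = 0 \<and> (\<forall>c<Suc k. lincomb n l p c = (if c = a then 1 else 0))"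
    using lincomb_onto_if_not_Mdn \<open>y \<notin> Mdn k n\<close> y assms(1) by auto
  then obtain l where l: "\<And>a. (\<Sum>i<n. l a i) = 0"
    "\<And>a c. c < Suc k \<Longrightarrow> lincomb n (l a) p c = (if c = a then 1 else 0)"
    by metis
  obtain \<kappa> i where \<kappa>: "(\<Sum>i<n. \<kappa> i) = 0" "\<forall>c<Suc k. lincomb n \<kappa> p c = 0" "i < n" "\<kappa> i \<noteq> 0"
    using exists_affine_dependence[of "Suc k" n p] assms(1) by auto
  then obtain j where j: "j < n" "j \<noteq> i" "\<kappa> j \<noteq> 0"
    using zero_sum_other_nonzero by metis
  define w where "w e = \<kappa> (Min e) * \<kappa> (Max e)" for e
  have "(\<Sum>e\<in>edges n. w e * v e) = 0" if "line_in_Mdn (Suc k) n y v" for v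
  proof -
    have "(\<lambda>e. mvec (Suc k) n p e + t * v e) \<in> Mdn (Suc k) n" for t
      using that by (simp add: line_in_Mdn_def y)
    then have "edge_form n v \<kappa> \<kappa> = 0"
      by (rule edge_form_line_dir_vanishes[where \<kappa> = \<kappa> and l = l]) (use \<kappa>(1,2) l in auto)
    then show ?thesis by (simp add: edge_form_diag w_def)
  qed
  with assms(3) have "w {i, j} = 0"
    using \<kappa>(3) j(1,2) by (auto simp: line_dirs_span_def doubleton_in_edges_iff)
  moreover have "w {i, j} \<noteq> 0"
    using \<kappa>(4) j(3) by (cases "i < j") (auto simp: w_def min_def max_def)
  ultimately show False by contradiction
qed

lemma Mdn_iff_line_dirs_span:
  assumes "k + 3 \<le> n"
  shows "y \<in> Mdn k n \<longleftrightarrow> y \<in> Mdn (Suc k) n \<and> line_dirs_span (Suc k) n y"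
  using assms Mdn_subset_Suc line_dirs_span_if_Mdn Mdn_if_line_dirs_span by blast

section \<open>Monomial maps\<close>

definition monomial_map ::
  "nat \<Rightarrow> (nat set \<Rightarrow> complex) \<Rightarrow> (nat set \<Rightarrow> nat set) \<Rightarrow> (nat set \<Rightarrow> complex) \<Rightarrow> nat set \<Rightarrow> complex"
  where "monomial_map n D \<pi> x e = (if e \<in> edges n then D e * x (inv \<pi> e) else 0)"

definition preserves_Mdn :: "nat \<Rightarrow> nat \<Rightarrow> (nat set \<Rightarrow> complex) \<Rightarrow> (nat set \<Rightarrow> nat set) \<Rightarrow> bool" where
  "preserves_Mdn k n D \<pi> \<longleftrightarrow> (\<forall>x\<in>vecs n. x \<in> Mdn k n \<longleftrightarrow> monomial_map n D \<pi> x \<in> Mdn k n)"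

lemma matvec_diag_perm:
  assumes "\<pi> permutes edges n"
  shows "matvec n (matmul n (diag_mat D) (perm_mat \<pi>)) = monomial_map n D \<pi>"
proof (intro ext)
  fix x e
  have entry: "matmul n (diag_mat D) (perm_mat \<pi>) e f = (if e \<in> edges n \<and> f = inv \<pi> e then D e else 0)"
    for f
  proof -
    have "e = \<pi> f \<longleftrightarrow> f = inv \<pi> e"
      using permutes_inverses[OF assms] by metis
    then have "matmul n (diag_mat D) (perm_mat \<pi>) e f
        = (\<Sum>g\<in>edges n. if g = e then (if f = inv \<pi> e then D e else 0) else 0)"
      unfolding matmul_def diag_mat_def perm_mat_def by (intro sum.cong) auto
    then show ?thesis by (simp add: finite_edges)
  qed
  show "matvec n (matmul n (diag_mat D) (perm_mat \<pi>)) x e = monomial_map n D \<pi> x e"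
  proof (cases "e \<in> edges n")
    case True
    then have "inv \<pi> e \<in> edges n"
      using permutes_in_image[OF permutes_inv[OF assms]] by simp
    moreover have "(\<Sum>f\<in>edges n. matmul n (diag_mat D) (perm_mat \<pi>) e f * x f)
        = (\<Sum>f\<in>edges n. if f = inv \<pi> e then D e * x f else 0)"
      using True by (intro sum.cong) (auto simp: entry)
    ultimately show ?thesis
      using True by (simp add: matvec_def monomial_map_def finite_edges)
  qed (simp add: matvec_def monomial_map_def)
qed

lemma preserves_Mdn_if_lin_aut:
  assumes "\<pi> permutes edges n" and "lin_aut d n (matmul n (diag_mat D) (perm_mat \<pi>))"
  shows "preserves_Mdn d n D \<pi>"
proof -
  have inj: "inj_on (monomial_map n D \<pi>) (vecs n)"
    and bij: "bij_betw (monomial_map n D \<pi>) (Mdn d n) (Mdn d n)"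
    using assms by (simp_all add: lin_aut_def nonsingular_def matvec_diag_perm)
  show ?thesis
    unfolding preserves_Mdn_def
  proof (intro ballI iffI)
    fix x assume "x \<in> Mdn d n"
    with bij show "monomial_map n D \<pi> x \<in> Mdn d n" by (rule bij_betw_apply)
  next
    fix x assume x: "x \<in> vecs n" and "monomial_map n D \<pi> x \<in> Mdn d n"
    with bij obtain x' where "x' \<in> Mdn d n" "monomial_map n D \<pi> x' = monomial_map n D \<pi> x"
      by (metis bij_betw_imp_surj_on imageE)
    with inj x Mdn_subset_vecs show "x \<in> Mdn d n" by (metis inj_onD subsetD)
  qed
qed

lemma monomial_map_in_vecs: "monomial_map n D \<pi> x \<in> vecs n"
  by (simp add: monomial_map_def vecs_def)

lemma monomial_map_add_scaled:
  "monomial_map n D \<pi> (\<lambda>e. x e + t * v e) = (\<lambda>e. monomial_map n D \<pi> x e + t * monomial_map n D \<pi> v e)"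
  by (auto simp: monomial_map_def algebra_simps)

lemma sum_mult_monomial_map:
  assumes "\<pi> permutes edges n"
  shows "(\<Sum>e\<in>edges n. w e * monomial_map n D \<pi> v e) = (\<Sum>f\<in>edges n. w (\<pi> f) * D (\<pi> f) * v f)"
proof -
  have "(\<Sum>e\<in>edges n. w e * monomial_map n D \<pi> v e)
      = (\<Sum>f\<in>edges n. w (\<pi> f) * monomial_map n D \<pi> v (\<pi> f))"
    by (subst sum.permute[OF assms]) (simp add: comp_def)
  also have "\<dots> = (\<Sum>f\<in>edges n. w (\<pi> f) * D (\<pi> f) * v f)"
    using permutes_in_image[OF assms] permutes_inverses(2)[OF assms]
    by (intro sum.cong) (auto simp: monomial_map_def)
  finally show ?thesis .
qed

lemma monomial_map_surj:
  assumes "\<pi> permutes edges n" and "\<forall>e\<in>edges n. D e \<noteq> 0" and "u \<in> vecs n"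
  shows "\<exists>v\<in>vecs n. monomial_map n D \<pi> v = u"
proof
  define v where "v f = (if f \<in> edges n then u (\<pi> f) / D (\<pi> f) else 0)" for f
  show "v \<in> vecs n" by (simp add: v_def vecs_def)
  have "monomial_map n D \<pi> v e = u e" for e
  proof (cases "e \<in> edges n")
    case True
    moreover have "inv \<pi> e \<in> edges n" "\<pi> (inv \<pi> e) = e"
      using True permutes_in_image[OF permutes_inv[OF assms(1)]] permutes_inverses(1)[OF assms(1)]
      by auto
    ultimately show ?thesis using assms(2) by (simp add: monomial_map_def v_def)
  qed (use assms(3) in \<open>simp add: monomial_map_def vecs_def\<close>)
  then show "monomial_map n D \<pi> v = u" ..
qed

lemma line_in_Mdn_monomial_map:
  assumes "preserves_Mdn k n D \<pi>" and "x \<in> vecs n" and "v \<in> vecs n"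
  shows "line_in_Mdn k n (monomial_map n D \<pi> x) (monomial_map n D \<pi> v) \<longleftrightarrow> line_in_Mdn k n x v"
proof -
  have "(\<lambda>e. x e + t * v e) \<in> Mdn k n
      \<longleftrightarrow> (\<lambda>e. monomial_map n D \<pi> x e + t * monomial_map n D \<pi> v e) \<in> Mdn k n" for t
  proof -
    have "(\<lambda>e. x e + t * v e) \<in> vecs n"
      using assms(2,3) by (simp add: vecs_def)
    with assms(1) have "(\<lambda>e. x e + t * v e) \<in> Mdn k n
        \<longleftrightarrow> monomial_map n D \<pi> (\<lambda>e. x e + t * v e) \<in> Mdn k n"
      unfolding preserves_Mdn_def by (rule bspec)
    then show ?thesis by (simp only: monomial_map_add_scaled)
  qed
  then show ?thesis
    using assms(3) by (simp add: line_in_Mdn_def monomial_map_in_vecs)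
qed

lemma line_dirs_span_monomial_mapD:
  assumes perm: "\<pi> permutes edges n" and D: "\<forall>e\<in>edges n. D e \<noteq> 0"
    and pres: "preserves_Mdn k n D \<pi>" and x: "x \<in> vecs n"
    and span: "line_dirs_span k n (monomial_map n D \<pi> x)"
  shows "line_dirs_span k n x"
  unfolding line_dirs_span_def
proof (intro allI impI ballI)
  fix w f
  assume w: "\<forall>v. line_in_Mdn k n x v \<longrightarrow> (\<Sum>e\<in>edges n. w e * v e) = 0"
  assume "f \<in> edges n"
  define w' where "w' e = w (inv \<pi> e) / D e" for e
  have "(\<Sum>e\<in>edges n. w' e * u e) = 0" if u: "line_in_Mdn k n (monomial_map n D \<pi> x) u" for u
  proof -
    obtain v where v: "v \<in> vecs n" "monomial_map n D \<pi> v = u"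
      using monomial_map_surj[OF perm D] u by (auto simp: line_in_Mdn_def)
    with u pres x have "line_in_Mdn k n x v"
      using line_in_Mdn_monomial_map by blast
    moreover have "w' (\<pi> g) * D (\<pi> g) = w g" if "g \<in> edges n" for g
      using that D permutes_in_image[OF perm] permutes_inverses(2)[OF perm]
      by (simp add: w'_def)
    ultimately show ?thesis
      using w v(2)[symmetric] by (simp add: sum_mult_monomial_map[OF perm] cong: sum.cong)
  qed
  with span have "w' (\<pi> f) = 0"
    using \<open>f \<in> edges n\<close> permutes_in_image[OF perm] by (simp add: line_dirs_span_def)
  with \<open>f \<in> edges n\<close> D permutes_in_image[OF perm] permutes_inverses(2)[OF perm]
  show "w f = 0" by (simp add: w'_def)
qed

lemma line_dirs_span_monomial_mapI:
  assumes perm: "\<pi> permutes edges n" and D: "\<forall>e\<in>edges n. D e \<noteq> 0"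
    and pres: "preserves_Mdn k n D \<pi>" and x: "x \<in> vecs n"
    and span: "line_dirs_span k n x"
  shows "line_dirs_span k n (monomial_map n D \<pi> x)"
  unfolding line_dirs_span_def
proof (intro allI impI ballI)
  fix w e
  assume w: "\<forall>u. line_in_Mdn k n (monomial_map n D \<pi> x) u \<longrightarrow> (\<Sum>e\<in>edges n. w e * u e) = 0"
  assume "e \<in> edges n"
  define w' where "w' f = w (\<pi> f) * D (\<pi> f)" for f
  have "(\<Sum>f\<in>edges n. w' f * v f) = 0" if v: "line_in_Mdn k n x v" for v
  proof -
    have "line_in_Mdn k n (monomial_map n D \<pi> x) (monomial_map n D \<pi> v)"
      using v pres x line_in_Mdn_monomial_map by (auto simp: line_in_Mdn_def)
    with w have "(\<Sum>e\<in>edges n. w e * monomial_map n D \<pi> v e) = 0" by blast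
    then show ?thesis by (simp add: sum_mult_monomial_map[OF perm] w'_def)
  qed
  with span have "w' (inv \<pi> e) = 0"
    using \<open>e \<in> edges n\<close> permutes_in_image[OF permutes_inv[OF perm]] by (simp add: line_dirs_span_def)
  with \<open>e \<in> edges n\<close> D permutes_inverses(1)[OF perm] show "w e = 0" by (simp add: w'_def)
qed

lemma preserves_Mdn_pred:
  assumes "k + 3 \<le> n" and "\<pi> permutes edges n" and "\<forall>e\<in>edges n. D e \<noteq> 0"
    and "preserves_Mdn (Suc k) n D \<pi>"
  shows "preserves_Mdn k n D \<pi>"
  unfolding preserves_Mdn_def
proof
  fix x assume x: "x \<in> vecs n"
  with assms(4) have "x \<in> Mdn (Suc k) n \<longleftrightarrow> monomial_map n D \<pi> x \<in> Mdn (Suc k) n"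
    unfolding preserves_Mdn_def by (rule bspec)
  moreover have "line_dirs_span (Suc k) n (monomial_map n D \<pi> x) \<longleftrightarrow> line_dirs_span (Suc k) n x"
    using line_dirs_span_monomial_mapI[OF assms(2-4) x] line_dirs_span_monomial_mapD[OF assms(2-4) x]
    by blast
  ultimately show "x \<in> Mdn k n \<longleftrightarrow> monomial_map n D \<pi> x \<in> Mdn k n"
    by (simp add: Mdn_iff_line_dirs_span[OF assms(1)])
qed

lemma preserves_Mdn_le:
  assumes "preserves_Mdn d n D \<pi>" and "j \<le> d" and "d + 2 \<le> n"
    and "\<pi> permutes edges n" and "\<forall>e\<in>edges n. D e \<noteq> 0"
  shows "preserves_Mdn j n D \<pi>"
  using assms(2)
proof (induction rule: inc_induct)
  case base
  show ?case by (fact assms(1))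
next
  case (step m)
  from \<open>m < d\<close> assms(3) have "m + 3 \<le> n" by linarith
  then show ?case using assms(4,5) step.IH by (rule preserves_Mdn_pred)
qed

section \<open>Stars\<close>

definition star :: "nat \<Rightarrow> nat \<Rightarrow> nat set set" where
  "star n v = {e \<in> edges n. v \<in> e}"

lemma star_eq_image:
  assumes "v < n"
  shows "star n v = (\<lambda>j. {v, j}) ` ({..<n} - {v})"
proof
  show "star n v \<subseteq> (\<lambda>j. {v, j}) ` ({..<n} - {v})"
  proof
    fix e assume "e \<in> star n v"
    then obtain i j where e: "e = {i, j}" "i < j" "j < n" "v \<in> e"
      by (auto simp: star_def elim: edgesE)
    then have "e = {v, i} \<and> i \<noteq> v \<or> e = {v, j} \<and> j \<noteq> v" by auto
    moreover have "i < n" "j < n" using e by simp_all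
    ultimately show "e \<in> (\<lambda>j. {v, j}) ` ({..<n} - {v})" by blast
  qed
  show "(\<lambda>j. {v, j}) ` ({..<n} - {v}) \<subseteq> star n v"
    using assms by (auto simp: star_def doubleton_in_edges_iff)
qed

lemma card_star:
  assumes "v < n"
  shows "card (star n v) = n - 1"
proof -
  have "inj_on (\<lambda>j. {v, j}) ({..<n} - {v})"
    by (auto simp: inj_on_def doubleton_eq_iff)
  with assms show ?thesis by (simp add: star_eq_image card_image)
qed

lemma star_inter:
  assumes "i < n" and "j < n" and "i \<noteq> j"
  shows "star n i \<inter> star n j = {{i, j}}"
proof
  show "star n i \<inter> star n j \<subseteq> {{i, j}}"
    using assms by (auto simp: star_eq_image doubleton_eq_iff)
  show "{{i, j}} \<subseteq> star n i \<inter> star n j"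
    using assms by (simp add: star_def doubleton_in_edges_iff)
qed

lemma star_inj:
  assumes "3 \<le> n" and "u < n" and "w < n" and "star n u = star n w"
  shows "u = w"
proof (rule ccontr)
  assume "u \<noteq> w"
  with assms(2-4) have "star n u = {{u, w}}"
    using star_inter[of u n w] by simp
  then have "card (star n u) = 1" by simp
  with assms(1,2) show False by (simp add: card_star)
qed

lemma mvec_cut_conf_singleton:
  assumes "e \<in> edges n"
  shows "mvec (Suc 0) n (cut_conf {u}) e = (if u \<in> e then 1 else 0)"
  using assms by (auto elim!: edgesE simp: mvec_cut_conf)

lemma card_doubleton_product:
  assumes "X \<inter> Y = {}" and "finite X" and "finite Y"
  shows "card {{x, y} | x y. x \<in> X \<and> y \<in> Y} = card X * card Y"
proof -
  have "{{x, y} | x y. x \<in> X \<and> y \<in> Y} = (\<lambda>(x, y). {x, y}) ` (X \<times> Y)" by auto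
  moreover have "inj_on (\<lambda>(x, y). {x, y}) (X \<times> Y)"
    using assms(1) by (auto simp: inj_on_def doubleton_eq_iff)
  ultimately show ?thesis using assms(2,3) by (simp add: card_image card_cartesian_product)
qed

lemma doubletons_with_singleton_eq_star:
  assumes "v < n"
  shows "{{x, y} | x y. x \<in> {v} \<and> y \<in> {..<n} - {v}} = star n v"
  using assms by (auto simp: star_eq_image)

lemma add_le_mult_plus_one:
  fixes s t :: nat
  assumes "1 \<le> s" and "1 \<le> t"
  shows "s + t \<le> s * t + 1" and "s + t = s * t + 1 \<Longrightarrow> s = 1 \<or> t = 1"
proof -
  obtain s' t' where "s = Suc s'" "t = Suc t'" using assms by (metis Suc_le_D One_nat_def)
  then show "s + t \<le> s * t + 1" and "s + t = s * t + 1 \<Longrightarrow> s = 1 \<or> t = 1" by simp_all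
qed

lemma star_if_complete_bipartite:
  assumes E: "E \<subseteq> edges n" "card E = n - 1"
    and X: "X \<subseteq> {..<n}" "x \<in> X" "y \<in> {..<n} - X"
    and cut: "\<And>a b. a \<in> X \<Longrightarrow> b \<in> {..<n} - X \<Longrightarrow> {a, b} \<in> E"
  shows "\<exists>v<n. E = star n v"
proof -
  define Y where "Y = {..<n} - X"
  define C where "C = {{a, b} | a b. a \<in> X \<and> b \<in> Y}"
  have "finite X" "finite Y" "X \<inter> Y = {}" using X(1) finite_subset by (auto simp: Y_def)
  then have card_C: "card C = card X * card Y"
    unfolding C_def by (intro card_doubleton_product)
  have "card X \<le> n" using card_mono[OF finite_lessThan X(1)] by simp
  with X(1) \<open>finite X\<close> have "card X + card Y = n" by (simp add: Y_def card_Diff_subset)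
  have "1 \<le> card X" "1 \<le> card Y"
    using X(2,3) \<open>finite X\<close> \<open>finite Y\<close> by (auto simp: Y_def Suc_le_eq card_gt_0_iff)
  have "C \<subseteq> E" using cut by (auto simp: C_def Y_def)
  moreover have "finite E" using E(1) finite_edges finite_subset by blast
  ultimately have "card C \<le> card E" by (rule card_mono[rotated])
  note counts = this add_le_mult_plus_one(1)[OF \<open>1 \<le> card X\<close> \<open>1 \<le> card Y\<close>]
    card_C E(2) \<open>card X + card Y = n\<close> \<open>1 \<le> card X\<close>
  then have "card X + card Y = card X * card Y + 1" by linarith
  from counts have "card C = card E" by linarith
  with \<open>C \<subseteq> E\<close> \<open>finite E\<close> have "C = E" by (intro card_subset_eq)
  from add_le_mult_plus_one(2)[OF \<open>1 \<le> card X\<close> \<open>1 \<le> card Y\<close> \<open>card X + card Y = card X * card Y + 1\<close>]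
  show ?thesis
  proof
    assume "card X = 1"
    then obtain v where "X = {v}" by (rule card_1_singletonE)
    with X(1) \<open>C = E\<close> show ?thesis
      using doubletons_with_singleton_eq_star[of v n] by (auto simp: C_def Y_def)
  next
    assume "card Y = 1"
    then obtain v where "Y = {v}" by (rule card_1_singletonE)
    with X(1) have "X = {..<n} - {v}" "v < n" by (auto simp: Y_def)
    moreover have "C = {{a, b} | a b. a \<in> {v} \<and> b \<in> X}"
      unfolding C_def \<open>Y = {v}\<close> by (auto simp: insert_commute)
    ultimately show ?thesis
      using \<open>C = E\<close> doubletons_with_singleton_eq_star[of v n] by auto
  qed
qed

lemma star_and_constant_if_1dim:
  fixes a :: "nat \<Rightarrow> 'a::idom" and D :: "nat set \<Rightarrow> 'a"
  assumes "2 \<le> n" and E: "E \<subseteq> edges n" "card E = n - 1" and D: "\<forall>e\<in>edges n. D e \<noteq> 0"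
    and a: "\<And>i j. i < n \<Longrightarrow> j < n \<Longrightarrow> i \<noteq> j \<Longrightarrow> (a i - a j)^2 = (if {i, j} \<in> E then D {i, j} else 0)"
  shows "\<exists>v<n. E = star n v \<and> (\<forall>e\<in>E. \<forall>e'\<in>E. D e = D e')"
proof -
  have adj: "{i, j} \<in> E \<longleftrightarrow> a i \<noteq> a j" if "i < n" "j < n" "i \<noteq> j" for i j
  proof -
    have "D {i, j} \<noteq> 0" using D that by (simp add: doubleton_in_edges_iff)
    moreover have "a i = a j \<longleftrightarrow> (a i - a j)^2 = 0" by simp
    ultimately show ?thesis using a[OF that] by (cases "{i, j} \<in> E") simp_all
  qed
  have "E \<noteq> {}" using E(2) assms(1) by auto
  then obtain e where "e \<in> E" by blast
  moreover from this E(1) obtain x y where "e = {x, y}" "x < y" "y < n" by (blast elim: edgesE)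
  ultimately have "{x, y} \<in> E" "x < y" "y < n" by simp_all
  define X where "X = {l. l < n \<and> a l = a x}"
  have "y \<in> {..<n} - X" using adj \<open>{x, y} \<in> E\<close> \<open>x < y\<close> \<open>y < n\<close> by (simp add: X_def)
  moreover have "{b, c} \<in> E" if "b \<in> X" "c \<in> {..<n} - X" for b c
    using that adj[of b c] by (force simp: X_def)
  ultimately obtain v where "v < n" and v: "E = star n v"
    using star_if_complete_bipartite[OF E, of X x y] \<open>x < y\<close> \<open>y < n\<close> by (auto simp: X_def)
  have "D e = D e'" if "e \<in> E" "e' \<in> E" for e e'
  proof -
    have "E = (\<lambda>j. {v, j}) ` ({..<n} - {v})" using \<open>v < n\<close> by (simp add: v star_eq_image)
    with \<open>e \<in> E\<close> \<open>e' \<in> E\<close> obtain i j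
      where ij: "e = {v, i}" "e' = {v, j}" "i < n" "j < n" "i \<noteq> v" "j \<noteq> v"
      by auto
    have "{i, j} \<notin> E" using ij by (auto simp: v star_def)
    then have "i = j \<or> a i = a j" using adj[of i j] ij by auto
    moreover have "D {v, i} = (a v - a i)^2" "D {v, j} = (a v - a j)^2"
      using a[of v i] a[of v j] ij \<open>v < n\<close> \<open>e \<in> E\<close> \<open>e' \<in> E\<close> by (simp_all add: v star_def)
    ultimately show ?thesis using ij by (elim disjE) simp_all
  qed
  with \<open>v < n\<close> v show ?thesis by blast
qed

lemma monomial_map_star_indicator:
  assumes "\<pi> permutes edges n"
  shows "monomial_map n D \<pi> (mvec (Suc 0) n (cut_conf {u})) e = (if e \<in> \<pi> ` star n u then D e else 0)"
proof (cases "e \<in> edges n")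
  case True
  then have "inv \<pi> e \<in> edges n"
    using permutes_in_image[OF permutes_inv[OF assms]] by simp
  moreover have "e \<in> \<pi> ` star n u \<longleftrightarrow> inv \<pi> e \<in> star n u"
    using permutes_inverses[OF assms] by (metis image_iff)
  ultimately show ?thesis using True
    by (simp add: monomial_map_def mvec_cut_conf_singleton star_def)
next
  case False
  moreover have "\<pi> ` star n u \<subseteq> edges n"
    using permutes_image[OF assms] by (auto simp: star_def)
  ultimately show ?thesis by (auto simp: monomial_map_def)
qed

lemma star_image_is_star:
  assumes "2 \<le> n" and perm: "\<pi> permutes edges n" and D: "\<forall>e\<in>edges n. D e \<noteq> 0"
    and pres: "preserves_Mdn (Suc 0) n D \<pi>" and "u < n"
  shows "\<exists>v<n. \<pi> ` star n u = star n v \<and> (\<forall>e\<in>\<pi> ` star n u. \<forall>e'\<in>\<pi> ` star n u. D e = D e')"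
proof -
  have "mvec (Suc 0) n (cut_conf {u}) \<in> Mdn (Suc 0) n" by (simp add: Mdn_def)
  moreover have "mvec (Suc 0) n (cut_conf {u}) \<in> Mdn (Suc 0) n
      \<longleftrightarrow> monomial_map n D \<pi> (mvec (Suc 0) n (cut_conf {u})) \<in> Mdn (Suc 0) n"
    using pres mvec_in_vecs unfolding preserves_Mdn_def by (rule bspec)
  ultimately obtain q where q: "monomial_map n D \<pi> (mvec (Suc 0) n (cut_conf {u})) = mvec (Suc 0) n q"
    by (auto simp: Mdn_def)
  have q_dist: "(q i 0 - q j 0)^2 = (if {i, j} \<in> \<pi> ` star n u then D {i, j} else 0)"
    if "i < n" "j < n" "i \<noteq> j" for i j
    using that q[THEN fun_cong, of "{i, j}"]
    by (simp add: mvec_doubleton sqdist_def monomial_map_star_indicator[OF perm])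
  have "star n u \<subseteq> edges n" by (auto simp: star_def)
  then have sub: "\<pi> ` star n u \<subseteq> edges n"
    using permutes_image[OF perm] by blast
  have card: "card (\<pi> ` star n u) = n - 1"
    using card_star[OF \<open>u < n\<close>] permutes_inj_on[OF perm] \<open>star n u \<subseteq> edges n\<close>
    by (simp add: card_image inj_on_subset)
  show ?thesis
    by (rule star_and_constant_if_1dim[OF assms(1) sub card D q_dist])
qed

lemma relabeling_if_stars_to_stars:
  assumes "3 \<le> n" and perm: "\<pi> permutes edges n"
    and stars: "\<And>u. u < n \<Longrightarrow> \<exists>v<n. \<pi> ` star n u = star n v"
  shows "\<exists>\<sigma>. \<sigma> permutes {..<n} \<and> (\<forall>u<n. \<pi> ` star n u = star n (\<sigma> u))"
proof -
  obtain \<tau> where \<tau>: "\<And>u. u < n \<Longrightarrow> \<tau> u < n \<and> \<pi> ` star n u = star n (\<tau> u)"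
    using stars by metis
  define \<sigma> where "\<sigma> u = (if u < n then \<tau> u else u)" for u
  have "inj_on \<tau> {..<n}"
  proof (rule inj_onI)
    fix u w assume "u \<in> {..<n}" "w \<in> {..<n}" "\<tau> u = \<tau> w"
    with \<tau> have "\<pi> ` star n u = \<pi> ` star n w" by simp
    moreover have "star n u \<subseteq> edges n" "star n w \<subseteq> edges n" by (auto simp: star_def)
    ultimately have "star n u = star n w"
      using permutes_inj_on[OF perm] by (simp add: inj_on_image_eq_iff)
    with assms(1) \<open>u \<in> {..<n}\<close> \<open>w \<in> {..<n}\<close> show "u = w" by (simp add: star_inj)
  qed
  moreover have "\<tau> ` {..<n} \<subseteq> {..<n}" using \<tau> by auto
  ultimately have "bij_betw \<tau> {..<n} {..<n}"
    by (simp add: bij_betw_def endo_inj_surj)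
  then have "bij_betw \<sigma> {..<n} {..<n}"
    by (rule bij_betw_cong[THEN iffD1, rotated]) (simp add: \<sigma>_def)
  then have "\<sigma> permutes {..<n}"
    by (rule bij_imp_permutes) (simp add: \<sigma>_def)
  moreover have "\<forall>u<n. \<pi> ` star n u = star n (\<sigma> u)"
    using \<tau> by (simp add: \<sigma>_def)
  ultimately show ?thesis by blast
qed

lemma doubleton_image_if_stars:
  assumes "\<sigma> permutes {..<n}" and "\<And>u. u < n \<Longrightarrow> \<pi> ` star n u = star n (\<sigma> u)"
    and "i < n" and "j < n" and "i \<noteq> j"
  shows "\<pi> {i, j} = {\<sigma> i, \<sigma> j}"
proof -
  have "{i, j} \<in> star n i \<inter> star n j"
    using star_inter[OF assms(3-5)] by simp
  then have "\<pi> {i, j} \<in> star n (\<sigma> i) \<inter> star n (\<sigma> j)"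
    using assms(2)[of i] assms(2)[of j] assms(3,4) by blast
  moreover have "\<sigma> i \<noteq> \<sigma> j" "\<sigma> i < n" "\<sigma> j < n"
    using assms(3-5) permutes_inj[OF assms(1)] permutes_in_image[OF assms(1)]
    by (auto dest: injD)
  ultimately show ?thesis using star_inter by blast
qed

lemma constant_if_constant_on_stars:
  assumes "2 \<le> n" and const: "\<And>v. v < n \<Longrightarrow> \<forall>e\<in>star n v. \<forall>e'\<in>star n v. D e = D e'"
  shows "\<exists>c. \<forall>e\<in>edges n. D e = c"
proof (intro exI ballI)
  fix e assume "e \<in> edges n"
  then obtain i j where e: "e = {i, j}" "i < j" "j < n" by (rule edgesE)
  have "{0, 1} \<in> star n 0" "{0, j} \<in> star n 0" "{0, j} \<in> star n j" "e \<in> star n j"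
    using assms(1) e by (auto simp: star_def doubleton_in_edges_iff)
  moreover have "0 < n" using assms(1) by simp
  ultimately show "D e = D {0, 1}"
    using const[of 0] const[of j] e(3) by metis
qed

lemma constant_if_constant_on_star_images:
  assumes "2 \<le> n" and "\<sigma> permutes {..<n}" and "\<And>u. u < n \<Longrightarrow> \<pi> ` star n u = star n (\<sigma> u)"
    and "\<And>u. u < n \<Longrightarrow> \<forall>e\<in>\<pi> ` star n u. \<forall>e'\<in>\<pi> ` star n u. D e = D e'"
  shows "\<exists>c. \<forall>e\<in>edges n. D e = c"
proof (rule constant_if_constant_on_stars[OF assms(1)])
  fix v assume "v < n"
  then have "v \<in> \<sigma> ` {..<n}" using permutes_image[OF assms(2)] by simp
  then obtain u where "u < n" and "v = \<sigma> u" by blast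
  then have "star n v = \<pi> ` star n u" using assms(3) by simp
  with assms(4)[OF \<open>u < n\<close>] show "\<forall>e\<in>star n v. \<forall>e'\<in>star n v. D e = D e'" by (simp only:)
qed

theorem theorem3p10:
  fixes d n :: nat and D :: "nat set \<Rightarrow> complex" and \<pi> :: "nat set \<Rightarrow> nat set"
  assumes "d \<ge> 1" and "n \<ge> d + 2"
    and "\<forall>e\<in>edges n. D e \<noteq> 0"
    and "\<pi> permutes edges n"
    and "lin_aut d n (matmul n (diag_mat D) (perm_mat \<pi>))"
  shows "(\<exists>\<sigma>. \<sigma> permutes {..<n} \<and> (\<forall>i j. i < j \<and> j < n \<longrightarrow> \<pi> {i, j} = {\<sigma> i, \<sigma> j}))
         \<and> (\<exists>c. \<forall>e\<in>edges n. D e = c)"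
proof -
  have "3 \<le> n" using assms(1,2) by linarith
  have pres: "preserves_Mdn (Suc 0) n D \<pi>"
    using preserves_Mdn_if_lin_aut[OF assms(4,5)] by (rule preserves_Mdn_le) (use assms in auto)
  have "2 \<le> n" using \<open>3 \<le> n\<close> by simp
  note star_image = star_image_is_star[OF this assms(4,3) pres]
  have stars: "\<exists>v<n. \<pi> ` star n u = star n v" if "u < n" for u
    using star_image[OF that] by auto
  have const: "\<forall>e\<in>\<pi> ` star n u. \<forall>e'\<in>\<pi> ` star n u. D e = D e'" if "u < n" for u
    using star_image[OF that] by (elim exE conjE)
  obtain \<sigma> where \<sigma>: "\<sigma> permutes {..<n}" "\<And>u. u < n \<Longrightarrow> \<pi> ` star n u = star n (\<sigma> u)"
    using relabeling_if_stars_to_stars[OF \<open>3 \<le> n\<close> assms(4) stars] by auto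
  have "\<pi> {i, j} = {\<sigma> i, \<sigma> j}" if "i < j" "j < n" for i j
    using that by (intro doubleton_image_if_stars[OF \<sigma>]) simp_all
  moreover have "\<exists>c. \<forall>e\<in>edges n. D e = c"
    by (rule constant_if_constant_on_star_images[OF \<open>2 \<le> n\<close> \<sigma> const])
  ultimately show ?thesis using \<sigma>(1) by blast
qed

end
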